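(* Let $n$ be a positive integer, $\lambda$ an infinite cardinal, and $\tau$ a shift-continuous feebly compact $T_1$-topology on the semilattice $\exp_n\lambda$. Then for any point $x\in\exp_n\lambda$ and any open neighbourhood $U(x)$ of $x$ in $(\exp_n\lambda,\tau)$ there exist finitely many $x_1,\ldots,x_m\in{\uparrow}x\setminus\{x\}$ such that $${\uparrow}x\setminus\operatorname{cl}_{\exp_n\lambda}(U(x))\subseteq{\uparrow}x_1\cup\cdots\cup{\uparrow}x_m.$$
   Context: For a positive integer $n$ and a cardinal $\lambda$, $\exp_n\lambda=\{A\subseteq\lambda\colon |A|\leqslant n\}$, regarded as a semilattice under $\cap$; its natural order is inclusion. For $e$ in a semilattice, ${\uparrow}e=\{f\colon e\leqslant f\}$. A topology on a semilattice is shift-continuous if the semilattice operation is separately continuous. A topological space is feebly compact if every locally finite open cover of it is finite. *)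

theory Defs
  imports "HOL-Analysis.Analysis"
begin

text \<open>The semilattice exp_n(L): subsets of L of cardinality at most n, with operation intersection.\<close>
definition expn :: "nat \<Rightarrow> 'a set \<Rightarrow> 'a set set" where
  "expn n L = {A. A \<subseteq> L \<and> finite A \<and> card A \<le> n}"

definition upset :: "'a set set \<Rightarrow> 'a set \<Rightarrow> 'a set set" where
  "upset S e = {f \<in> S. e \<subseteq> f}"

definition shift_continuous :: "'a set topology \<Rightarrow> bool" where
  "shift_continuous T \<longleftrightarrow>
     (\<forall>a\<in>topspace T. continuous_map T T (\<lambda>x. x \<inter> a) \<and> continuous_map T T (\<lambda>x. a \<inter> x))"

definition locally_finite_family :: "'b topology \<Rightarrow> 'b set set \<Rightarrow> bool" where
  "locally_finite_family T \<U> \<longleftrightarrow>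
     (\<forall>x\<in>topspace T. \<exists>V. openin T V \<and> x \<in> V \<and> finite {U \<in> \<U>. U \<inter> V \<noteq> {}})"

definition feebly_compact :: "'b topology \<Rightarrow> bool" where
  "feebly_compact T \<longleftrightarrow>
     (\<forall>\<U>. (\<forall>U\<in>\<U>. openin T U) \<and> \<Union>\<U> = topspace T \<and> locally_finite_family T \<U>
          \<longrightarrow> finite \<U>)"

end

theory Submission imports Defs begin

text \<open>Upper sets of finite elements are clopen, and an element of maximal cardinality in a
  nonempty open set \<open>R\<close> is isolated, since \<open>{y} = \<up>y \<inter> R\<close>. If the claim failed, then
  \<open>A = \<up>x - cl U\<close> would not be covered by finitely many \<open>\<up>(x \<union> {a})\<close>; removing such upper sets
  from \<open>A\<close> and taking an isolated point of the remainder yields, for every finite \<open>K\<close>, an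
  isolated point \<open>y \<in> A\<close> with \<open>y \<inter> K \<subseteq> x\<close>. By Zorn's lemma there are then infinitely many
  isolated points of \<open>A\<close> whose pairwise intersections lie in \<open>x\<close>. Every point has a
  neighbourhood (\<open>U\<close>, \<open>\<up>z\<close>, or the complement of \<open>\<up>x\<close>) meeting only finitely many of them, so
  their singletons together with the complement of their set form an infinite locally finite
  open cover, contradicting feeble compactness.\<close>

lemma expn_subset:
  assumes "y \<in> expn n L" "z \<subseteq> y"
  shows "z \<in> expn n L"
  using assms card_mono[of y z] finite_subset[of z y] unfolding expn_def by auto

lemma closedin_upset:
  assumes "t1_space T" "shift_continuous T" "e \<in> topspace T"
  shows "closedin T (upset (topspace T) e)"
proof -
  have "continuous_map T T (\<lambda>f. f \<inter> e)"
    using assms(2,3) unfolding shift_continuous_def by blast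
  then have "closedin T {f \<in> topspace T. f \<inter> e \<in> {e}}"
    using closedin_continuous_map_preimage closedin_t1_singleton[OF assms(1,3)] by blast
  moreover have "upset (topspace T) e = {f \<in> topspace T. f \<inter> e \<in> {e}}"
    unfolding upset_def by auto
  ultimately show ?thesis
    by simp
qed

text \<open>The complement of \<open>\<up>e\<close> is the preimage of the finitely many proper subsets of \<open>e\<close>
  under \<open>f \<mapsto> f \<inter> e\<close>.\<close>
lemma openin_upset:
  assumes "t1_space T" "shift_continuous T" "e \<in> topspace T" "finite e"
  shows "openin T (upset (topspace T) e)"
proof -
  have cont: "continuous_map T T (\<lambda>f. f \<inter> e)"
    using assms(2,3) unfolding shift_continuous_def by blast
  have complement: "topspace T - upset (topspace T) e =
          (\<Union>y\<in>Pow e - {e}. {f \<in> topspace T. f \<inter> e \<in> {y} \<inter> topspace T})"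
    using cont unfolding upset_def continuous_map_def by auto
  have "closedin T ({y} \<inter> topspace T)" for y
    using assms(1) by (cases "y \<in> topspace T") (auto simp: closedin_t1_singleton)
  then have "closedin T (topspace T - upset (topspace T) e)"
    unfolding complement
    by (intro closedin_Union) (use assms(4) closedin_continuous_map_preimage[OF cont] in blast)+
  then show ?thesis
    by (simp add: closedin_def upset_def Diff_Diff_Int inf.absorb2)
qed

lemma openin_upset_expn:
  assumes "t1_space T" "shift_continuous T" "topspace T = expn n L" "e \<in> expn n L"
  shows "openin T (upset (expn n L) e)"
  using openin_upset[of T e] assms by (simp add: expn_def)

lemma exists_isolated_point_in_openin:
  assumes "t1_space T" "shift_continuous T" "topspace T = expn n L"
    and "openin T R" "R \<noteq> {}"
  shows "\<exists>y\<in>R. openin T {y}"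
proof -
  have R_expn: "R \<subseteq> expn n L"
    using openin_subset[OF assms(4)] assms(3) by simp
  have "\<forall>w. w \<in> R \<longrightarrow> card w < Suc n"
    using R_expn unfolding expn_def by auto
  then obtain y where "y \<in> R" and y_max: "\<And>w. w \<in> R \<Longrightarrow> card w \<le> card y"
    using ex_has_greatest_nat[of "\<lambda>w. w \<in> R"] assms(5) by blast
  have "{y} = upset (expn n L) y \<inter> R"
  proof (intro equalityI subsetI)
    fix w assume w: "w \<in> upset (expn n L) y \<inter> R"
    then have "y \<subseteq> w" "finite w" "card w \<le> card y"
      using y_max R_expn unfolding upset_def expn_def by auto
    then show "w \<in> {y}" using card_mono card_subset_eq le_antisym by (metis singletonI)
  qed (use \<open>y \<in> R\<close> R_expn in \<open>auto simp: upset_def\<close>)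
  moreover have "openin T (upset (expn n L) y)"
    using openin_upset_expn assms(1-3) \<open>y \<in> R\<close> R_expn by blast
  ultimately show ?thesis using \<open>y \<in> R\<close> assms(4) by (metis openin_Int)
qed

lemma exists_isolated_point_avoiding:
  assumes "t1_space T" "shift_continuous T" "topspace T = expn n L" "x \<in> expn n L"
    and "openin T A" "A \<subseteq> upset (expn n L) x"
    and not_covered: "\<And>F. finite F \<Longrightarrow> F \<subseteq> upset (expn n L) x - {x} \<Longrightarrow>
                        \<not> A \<subseteq> (\<Union>f\<in>F. upset (expn n L) f)"
    and "finite K"
  shows "\<exists>y\<in>A. openin T {y} \<and> y \<inter> K \<subseteq> x"
proof -
  define S where "S = expn n L"
  define F where "F = (\<lambda>a. insert a x) ` (K - x) \<inter> S"
  have F: "finite F" "F \<subseteq> upset S x - {x}"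
    using assms(8) unfolding F_def upset_def by auto
  define R where "R = A - (\<Union>f\<in>F. upset S f)"
  have "openin T R"
    unfolding R_def using assms(3) F(1) closedin_upset[OF assms(1,2)]
    by (intro openin_diff assms(5) closedin_Union) (auto simp: F_def S_def)
  moreover have "R \<noteq> {}"
    using not_covered F unfolding R_def S_def by blast
  ultimately obtain y where y: "y \<in> R" "openin T {y}"
    using exists_isolated_point_in_openin assms(1-3) by blast
  have "y \<inter> K \<subseteq> x"
  proof
    fix a assume a: "a \<in> y \<inter> K"
    show "a \<in> x"
    proof (rule ccontr)
      assume "a \<notin> x"
      moreover have "x \<subseteq> y" "y \<in> S"
        using y(1) assms(6) unfolding R_def S_def upset_def by auto
      ultimately have "insert a x \<in> F" "y \<in> upset S (insert a x)"
        using a expn_subset[of y n L "insert a x"] unfolding F_def S_def upset_def by auto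
      then show False using y(1) unfolding R_def by blast
    qed
  qed
  then show ?thesis using y unfolding R_def by blast
qed

text \<open>A maximal family (Zorn) cannot be finite: a new member meets the union of the family
  only inside \<open>x\<close>, so it is not already in the family.\<close>
lemma exists_infinite_pairwise_meets_within:
  assumes "\<And>K. finite K \<Longrightarrow> \<exists>y\<in>P. y \<inter> K \<subseteq> x \<and> \<not> y \<subseteq> x"
    and "\<And>y. y \<in> P \<Longrightarrow> finite y"
  shows "\<exists>Y\<subseteq>P. infinite Y \<and> pairwise (\<lambda>u v. u \<inter> v \<subseteq> x) Y"
proof -
  define \<A> where "\<A> = {Y. Y \<subseteq> P \<and> pairwise (\<lambda>u v. u \<inter> v \<subseteq> x) Y}"
  have "\<forall>C\<in>chains \<A>. \<Union>C \<in> \<A>"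
  proof
    fix C assume C: "C \<in> chains \<A>"
    have "pairwise (\<lambda>u v. u \<inter> v \<subseteq> x) (\<Union>C)"
    proof (rule pairwiseI)
      fix u v assume "u \<in> \<Union>C" "v \<in> \<Union>C" "u \<noteq> v"
      then obtain Y\<^sub>u Y\<^sub>v where "Y\<^sub>u \<in> C" "Y\<^sub>v \<in> C" "u \<in> Y\<^sub>u" "v \<in> Y\<^sub>v"
        by blast
      moreover have "Y\<^sub>u \<subseteq> Y\<^sub>v \<or> Y\<^sub>v \<subseteq> Y\<^sub>u"
        using C calculation(1,2) unfolding chains_def chain_subset_def by blast
      ultimately obtain Y where "Y \<in> C" "u \<in> Y" "v \<in> Y"
        by blast
      moreover have "pairwise (\<lambda>u v. u \<inter> v \<subseteq> x) Y"
        using C \<open>Y \<in> C\<close> unfolding chains_def \<A>_def by blast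
      ultimately show "u \<inter> v \<subseteq> x"
        using \<open>u \<noteq> v\<close> by (simp add: pairwise_def)
    qed
    moreover have "\<Union>C \<subseteq> P"
      using C unfolding chains_def \<A>_def by blast
    ultimately show "\<Union>C \<in> \<A>" unfolding \<A>_def by blast
  qed
  then obtain M where "M \<in> \<A>" and M_max: "\<And>Y. Y \<in> \<A> \<Longrightarrow> M \<subseteq> Y \<Longrightarrow> Y = M"
    by (meson Zorn_Lemma)
  then have M: "M \<subseteq> P" "pairwise (\<lambda>u v. u \<inter> v \<subseteq> x) M"
    unfolding \<A>_def by auto
  have "infinite M"
  proof
    assume "finite M"
    then have "finite (\<Union>M)"
      using M(1) assms(2) by (intro finite_Union) auto
    from assms(1)[OF this] obtain y where y: "y \<in> P" "y \<inter> \<Union>M \<subseteq> x" "\<not> y \<subseteq> x"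
      by blast
    have "y \<notin> M"
    proof
      assume "y \<in> M"
      then have "y \<subseteq> x" using y(2) by blast
      then show False using y(3) by blast
    qed
    have "pairwise (\<lambda>u v. u \<inter> v \<subseteq> x) (insert y M)"
      using M(2) y(2) unfolding pairwise_insert by blast
    then have "insert y M = M"
      using M_max[of "insert y M"] M(1) y(1) unfolding \<A>_def by blast
    then show False
      using \<open>y \<notin> M\<close> by blast
  qed
  then show ?thesis using M by blast
qed

lemma neighbourhood_meets_finitely:
  assumes "t1_space T" "shift_continuous T" "topspace T = expn n L" "x \<in> expn n L"
    and "openin T U" "x \<in> U"
    and "Y \<subseteq> upset (expn n L) x - U" "pairwise (\<lambda>u v. u \<inter> v \<subseteq> x) Y"
    and "z \<in> expn n L"
  shows "\<exists>N. openin T N \<and> z \<in> N \<and> finite (N \<inter> Y)"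
proof -
  consider "\<not> x \<subseteq> z" | "z = x" | a where "a \<in> z" "a \<notin> x"
    by blast
  then show ?thesis
  proof cases
    case 1
    have "openin T (topspace T - upset (expn n L) x)"
      using closedin_upset[OF assms(1,2)] assms(3,4) closedin_def by metis
    moreover have "(topspace T - upset (expn n L) x) \<inter> Y = {}"
      using assms(7) by blast
    ultimately show ?thesis
      using 1 assms(3,9) unfolding upset_def
      by (metis (no_types, lifting) DiffI finite.emptyI mem_Collect_eq)
  next
    case 2
    have "U \<inter> Y = {}"
      using assms(7) by blast
    then show ?thesis
      using 2 assms(5,6) by (metis finite.emptyI)
  next
    case 3
    have "upset (expn n L) z \<inter> Y \<subseteq> {y \<in> Y. a \<in> y}"
      using 3 unfolding upset_def by auto
    moreover have "{y \<in> Y. a \<in> y} \<subseteq> {y0}" if "y0 \<in> Y" "a \<in> y0" for y0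
      using assms(8) that 3 unfolding pairwise_def by blast
    then have "finite {y \<in> Y. a \<in> y}"
      by (metis (no_types, lifting) Collect_empty_eq finite.emptyI finite_subset finite_insert)
    ultimately show ?thesis
      using openin_upset_expn[OF assms(1-3,9)] assms(9)
      by (intro exI[of _ "upset (expn n L) z"]) (auto simp: upset_def intro: finite_subset)
  qed
qed

lemma feebly_compact_finite_isolated_points:
  assumes "feebly_compact T" "t1_space T"
    and "Y \<subseteq> topspace T" "\<And>y. y \<in> Y \<Longrightarrow> openin T {y}"
    and loc_fin: "\<And>z. z \<in> topspace T \<Longrightarrow> \<exists>N. openin T N \<and> z \<in> N \<and> finite (N \<inter> Y)"
  shows "finite Y"
proof -
  have "openin T (topspace T - Y)"
  proof (subst openin_subopen, intro ballI)
    fix z assume z: "z \<in> topspace T - Y"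
    then obtain N where N: "openin T N" "z \<in> N" "finite (N \<inter> Y)"
      using loc_fin by blast
    then have "openin T (N - N \<inter> Y)"
      using assms(2,3) t1_space_closedin_finite by (metis inf.coboundedI2 openin_diff)
    moreover have "N - N \<inter> Y \<subseteq> topspace T - Y"
      using openin_subset[OF N(1)] by blast
    ultimately show "\<exists>V. openin T V \<and> z \<in> V \<and> V \<subseteq> topspace T - Y"
      using N(2) z by blast
  qed
  moreover define \<C> where "\<C> = (\<lambda>y. {y}) ` Y \<union> {topspace T - Y}"
  ultimately have "\<forall>W\<in>\<C>. openin T W" "\<Union>\<C> = topspace T"
    using assms(3,4) by (auto simp: \<C>_def)
  moreover have "locally_finite_family T \<C>"
    unfolding locally_finite_family_def
  proof
    fix z assume "z \<in> topspace T"
    then obtain N where N: "openin T N" "z \<in> N" "finite (N \<inter> Y)"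
      using loc_fin by blast
    have "{W \<in> \<C>. W \<inter> N \<noteq> {}} \<subseteq> (\<lambda>y. {y}) ` (N \<inter> Y) \<union> {topspace T - Y}"
      unfolding \<C>_def by auto
    then have "finite {W \<in> \<C>. W \<inter> N \<noteq> {}}"
      using N(3) finite_subset by blast
    then show "\<exists>V. openin T V \<and> z \<in> V \<and> finite {W \<in> \<C>. W \<inter> V \<noteq> {}}"
      using N by blast
  qed
  ultimately have "finite \<C>"
    using assms(1) unfolding feebly_compact_def by (meson allE[of _ \<C>])
  then show ?thesis
    unfolding \<C>_def by (auto dest: finite_imageD simp: inj_on_def)
qed

theorem proposition9:
  fixes n :: nat and L :: "'a set" and T :: "'a set topology"
  assumes "n \<ge> 1"
    and "infinite L"
    and "topspace T = expn n L"
    and "shift_continuous T"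
    and "feebly_compact T"
    and "t1_space T"
    and "x \<in> expn n L"
    and "openin T U" and "x \<in> U"
  shows "\<exists>F. finite F \<and> F \<subseteq> upset (expn n L) x - {x} \<and>
           upset (expn n L) x - T closure_of U \<subseteq> (\<Union>y\<in>F. upset (expn n L) y)"
proof (rule ccontr)
  assume not_covered: "\<not> ?thesis"
  define A where "A = upset (expn n L) x - T closure_of U"
  define P where "P = {y \<in> A. openin T {y}}"
  have U_closure: "U \<subseteq> T closure_of U"
    by (rule closure_of_subset[OF openin_subset[OF assms(8)]])
  have "openin T A"
    unfolding A_def by (intro openin_diff closedin_closure_of openin_upset_expn[OF assms(6,4,3,7)])
  have avoiding: "\<exists>y\<in>P. y \<inter> K \<subseteq> x \<and> \<not> y \<subseteq> x" if K: "finite K" for K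
  proof -
    obtain y where y: "y \<in> A" "openin T {y}" "y \<inter> K \<subseteq> x"
      using exists_isolated_point_avoiding[OF assms(6,4,3,7) \<open>openin T A\<close> _ _ K] not_covered
      unfolding A_def by blast
    have "x \<subseteq> y" "y \<notin> T closure_of U"
      using y(1) unfolding A_def upset_def by auto
    then have "\<not> y \<subseteq> x"
      using U_closure assms(9) by (metis subset_antisym subsetD)
    with y show ?thesis unfolding P_def by blast
  qed
  have finite_P: "finite y" if "y \<in> P" for y
    using that unfolding P_def A_def upset_def expn_def by blast
  obtain Y where Y: "Y \<subseteq> P" "infinite Y" "pairwise (\<lambda>u v. u \<inter> v \<subseteq> x) Y"
    using exists_infinite_pairwise_meets_within[OF avoiding finite_P] by blast
  have "Y \<subseteq> upset (expn n L) x - U"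
    using Y(1) U_closure unfolding P_def A_def by blast
  then have "\<exists>N. openin T N \<and> z \<in> N \<and> finite (N \<inter> Y)" if "z \<in> topspace T" for z
    using neighbourhood_meets_finitely[OF assms(6,4,3,7,8,9) _ Y(3)] that assms(3) by blast
  moreover have "Y \<subseteq> topspace T" "\<And>y. y \<in> Y \<Longrightarrow> openin T {y}"
    using Y(1) assms(3) unfolding P_def A_def upset_def by auto
  ultimately have "finite Y"
    using feebly_compact_finite_isolated_points[OF assms(5,6)] by blast
  then show False
    using Y(2) by blast
qed

end
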